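(* $\mathcal{VMU} \subsetneq \mathcal{LEAN} \setminus \{\top\}$.
   Context: Literals come with a fixed-point-free involution $x \mapsto \overline{x}$; variables are positive literals. A clause is a finite set $C$ of literals with $C \cap \overline{C} = \emptyset$; a clause-set is a finite set of clauses; $\top$ is the empty clause-set. $\mathrm{var}(F)$ is the set of variables of $F$. A partial assignment is a map $\varphi : V \to \{0,1\}$ on a finite set $V = \mathrm{var}(\varphi)$ of variables, $\varphi(\overline{v}) = 1 - \varphi(v)$; $F$ is satisfiable iff some partial assignment makes some literal of every clause true. An autarky for $F$ is a partial assignment $\varphi$ such that every clause of $F$ containing a literal falsified by $\varphi$ also contains a literal satisfied by $\varphi$. $\mathcal{LEAN}$ is the class of clause-sets $F$ with no autarky $\varphi$ such that $\mathrm{var}(\varphi) \cap \mathrm{var}(F) \ne \emptyset$. $\mathcal{VMU}$ is the class of unsatisfiable clause-sets $F$ such that every unsatisfiable $F' \subseteq F$ has $\mathrm{var}(F') = \mathrm{var}(F)$. *)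

theory Defs
  imports Main
begin

text \<open>Literals over variables of type 'v: positive literals are the variables,
  the involution is complementation (fixed-point free).\<close>
datatype 'v lit = Pos 'v | Neg 'v

fun compl :: "'v lit \<Rightarrow> 'v lit" where
  "compl (Pos v) = Neg v"
| "compl (Neg v) = Pos v"

fun var_lit :: "'v lit \<Rightarrow> 'v" where
  "var_lit (Pos v) = v"
| "var_lit (Neg v) = v"

type_synonym 'v clause = "'v lit set"
type_synonym 'v cls = "'v clause set"

definition is_clause :: "'v clause \<Rightarrow> bool" where
  "is_clause C \<longleftrightarrow> finite C \<and> C \<inter> compl ` C = {}"

definition is_clause_set :: "'v cls \<Rightarrow> bool" where
  "is_clause_set F \<longleftrightarrow> finite F \<and> (\<forall>C\<in>F. is_clause C)"

definition vars :: "'v cls \<Rightarrow> 'v set" where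
  "vars F = (\<Union>C\<in>F. var_lit ` C)"

text \<open>Partial assignments: partial maps with finite domain (true = 1, false = 0).\<close>
definition is_pa :: "('v \<rightharpoonup> bool) \<Rightarrow> bool" where
  "is_pa \<phi> \<longleftrightarrow> finite (dom \<phi>)"

fun lit_val :: "('v \<rightharpoonup> bool) \<Rightarrow> 'v lit \<Rightarrow> bool option" where
  "lit_val \<phi> (Pos v) = \<phi> v"
| "lit_val \<phi> (Neg v) = map_option Not (\<phi> v)"

definition sat_lit :: "('v \<rightharpoonup> bool) \<Rightarrow> 'v lit \<Rightarrow> bool" where
  "sat_lit \<phi> x \<longleftrightarrow> lit_val \<phi> x = Some True"

definition fals_lit :: "('v \<rightharpoonup> bool) \<Rightarrow> 'v lit \<Rightarrow> bool" where
  "fals_lit \<phi> x \<longleftrightarrow> lit_val \<phi> x = Some False"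

definition satisfiable :: "'v cls \<Rightarrow> bool" where
  "satisfiable F \<longleftrightarrow> (\<exists>\<phi>. is_pa \<phi> \<and> (\<forall>C\<in>F. \<exists>x\<in>C. sat_lit \<phi> x))"

definition autarky :: "('v \<rightharpoonup> bool) \<Rightarrow> 'v cls \<Rightarrow> bool" where
  "autarky \<phi> F \<longleftrightarrow> is_pa \<phi> \<and>
     (\<forall>C\<in>F. (\<exists>x\<in>C. fals_lit \<phi> x) \<longrightarrow> (\<exists>x\<in>C. sat_lit \<phi> x))"

definition LEAN :: "'v cls set" where
  "LEAN = {F. is_clause_set F \<and> \<not> (\<exists>\<phi>. autarky \<phi> F \<and> dom \<phi> \<inter> vars F \<noteq> {})}"

definition VMU :: "'v cls set" where
  "VMU = {F. is_clause_set F \<and> \<not> satisfiable F \<and>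
            (\<forall>F'\<subseteq>F. \<not> satisfiable F' \<longrightarrow> vars F' = vars F)}"

end

theory Submission
  imports Defs
begin

text \<open>An autarky for a VMU clause-set F would leave untouched an unsatisfiable subset of F
  (any satisfying assignment of the untouched clauses, overridden by the autarky, would
  satisfy F), yet that subset misses the variables assigned by the autarky. Conversely,
  the clause-set with the complementary unit clauses on two distinct variables is lean
  but has an unsatisfiable subset on only one variable.\<close>

lemma lit_val_map_add_in: "var_lit x \<in> dom \<phi> \<Longrightarrow> lit_val (\<psi> ++ \<phi>) x = lit_val \<phi> x"
  by (cases x) (auto simp: map_add_def split: option.splits)

lemma lit_val_map_add_notin: "var_lit x \<notin> dom \<phi> \<Longrightarrow> lit_val (\<psi> ++ \<phi>) x = lit_val \<psi> x"
  by (cases x) (auto simp: map_add_def split: option.splits)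

lemma sat_or_fals_lit: "var_lit x \<in> dom \<phi> \<Longrightarrow> sat_lit \<phi> x \<or> fals_lit \<phi> x"
  by (cases x) (auto simp: sat_lit_def fals_lit_def)

lemma var_lit_in_dom_if_sat_lit: "sat_lit \<phi> x \<Longrightarrow> var_lit x \<in> dom \<phi>"
  by (cases x) (auto simp: sat_lit_def)

lemma sat_lit_map_add_notin: "var_lit x \<notin> dom \<phi> \<Longrightarrow> sat_lit (\<psi> ++ \<phi>) x = sat_lit \<psi> x"
  by (simp add: sat_lit_def lit_val_map_add_notin)

lemma sat_lit_map_add: "sat_lit \<phi> x \<Longrightarrow> sat_lit (\<psi> ++ \<phi>) x"
  using lit_val_map_add_in[OF var_lit_in_dom_if_sat_lit, of \<phi> x \<psi>] by (simp add: sat_lit_def)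

lemma satisfiable_empty: "satisfiable {}"
  unfolding satisfiable_def is_pa_def by (intro exI[of _ Map.empty]) simp

lemma satisfiable_if_autarky_untouched_satisfiable:
  assumes au: "autarky \<phi> F"
    and sat: "satisfiable {C \<in> F. \<forall>x\<in>C. var_lit x \<notin> dom \<phi>}"
  shows "satisfiable F"
proof -
  from sat obtain \<psi> where pa: "is_pa \<psi>"
    and sat\<psi>: "\<forall>C\<in>{C \<in> F. \<forall>x\<in>C. var_lit x \<notin> dom \<phi>}. \<exists>x\<in>C. sat_lit \<psi> x"
    unfolding satisfiable_def by blast
  have "\<exists>x\<in>C. sat_lit (\<psi> ++ \<phi>) x" if C: "C \<in> F" for C
  proof (cases "\<forall>x\<in>C. var_lit x \<notin> dom \<phi>")
    case True
    from sat\<psi> C True obtain x where x: "x \<in> C" "sat_lit \<psi> x" by blast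
    with True have "sat_lit (\<psi> ++ \<phi>) x" by (simp add: sat_lit_map_add_notin)
    with x show ?thesis by blast
  next
    case False
    then obtain x where "x \<in> C" "var_lit x \<in> dom \<phi>" by blast
    hence "\<exists>x\<in>C. fals_lit \<phi> x \<or> sat_lit \<phi> x" using sat_or_fals_lit[of x \<phi>] by blast
    moreover have "(\<exists>x\<in>C. fals_lit \<phi> x) \<longrightarrow> (\<exists>x\<in>C. sat_lit \<phi> x)"
      using au C unfolding autarky_def by blast
    ultimately obtain y where "y \<in> C" "sat_lit \<phi> y" by blast
    thus ?thesis using sat_lit_map_add by blast
  qed
  moreover have "is_pa (\<psi> ++ \<phi>)" using pa au by (simp add: is_pa_def autarky_def)
  ultimately show ?thesis unfolding satisfiable_def by blast
qed

lemma VMU_subset_LEAN: "VMU \<subseteq> LEAN - {{}}"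
proof
  fix F :: "'v cls" assume "F \<in> VMU"
  hence cs: "is_clause_set F" and unsat: "\<not> satisfiable F"
    and vmu: "\<And>F'. F' \<subseteq> F \<Longrightarrow> \<not> satisfiable F' \<Longrightarrow> vars F' = vars F"
    unfolding VMU_def by blast+
  have "dom \<phi> \<inter> vars F = {}" if au: "autarky \<phi> F" for \<phi>
  proof -
    define F' where "F' = {C \<in> F. \<forall>x\<in>C. var_lit x \<notin> dom \<phi>}"
    have "\<not> satisfiable F'"
      using unsat satisfiable_if_autarky_untouched_satisfiable[OF au] unfolding F'_def by blast
    hence "vars F' = vars F" using vmu by (simp add: F'_def)
    moreover have "dom \<phi> \<inter> vars F' = {}" by (auto simp: F'_def vars_def)
    ultimately show ?thesis by simp
  qed
  moreover have "F \<noteq> {}" using unsat satisfiable_empty by blast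
  ultimately show "F \<in> LEAN - {{}}" using cs by (auto simp: LEAN_def)
qed

lemma vars_Un: "vars (F \<union> G) = vars F \<union> vars G"
  by (simp add: vars_def)

definition unit_pair :: "'v \<Rightarrow> 'v cls" where
  "unit_pair v = {{Pos v}, {Neg v}}"

lemma unsatisfiable_unit_pair: "\<not> satisfiable (unit_pair v)"
  by (auto simp: unit_pair_def satisfiable_def sat_lit_def)

lemma vars_unit_pair: "vars (unit_pair v) = {v}"
  by (auto simp: unit_pair_def vars_def)

lemma is_clause_set_unit_pair: "is_clause_set (unit_pair v)"
  by (auto simp: unit_pair_def is_clause_set_def is_clause_def)

lemma autarky_unassigned_if_unit_pair:
  assumes "autarky \<phi> F" and "unit_pair v \<subseteq> F"
  shows "v \<notin> dom \<phi>"
proof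
  assume "v \<in> dom \<phi>"
  then obtain t where t: "\<phi> v = Some t" by blast
  have "{Pos v} \<in> F" "{Neg v} \<in> F" using assms(2) by (auto simp: unit_pair_def)
  with assms(1) have "fals_lit \<phi> (Pos v) \<longrightarrow> sat_lit \<phi> (Pos v)"
    and "fals_lit \<phi> (Neg v) \<longrightarrow> sat_lit \<phi> (Neg v)"
    unfolding autarky_def by blast+
  with t show False by (cases t) (simp_all add: sat_lit_def fals_lit_def)
qed

lemma unit_pairs_LEAN: "unit_pair a \<union> unit_pair b \<in> LEAN"
proof -
  have "vars (unit_pair a \<union> unit_pair b) = {a, b}"
    by (auto simp: vars_unit_pair vars_Un)
  moreover have "a \<notin> dom \<phi>" "b \<notin> dom \<phi>" if "autarky \<phi> (unit_pair a \<union> unit_pair b)" for \<phi>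
    using autarky_unassigned_if_unit_pair[OF that] by auto
  moreover have "is_clause_set (unit_pair a \<union> unit_pair b)"
    using is_clause_set_unit_pair[of a] is_clause_set_unit_pair[of b]
    unfolding is_clause_set_def by blast
  ultimately show ?thesis unfolding LEAN_def by auto
qed

lemma unit_pairs_not_VMU:
  assumes "a \<noteq> b" shows "unit_pair a \<union> unit_pair b \<notin> VMU"
proof
  assume "unit_pair a \<union> unit_pair b \<in> VMU"
  hence "\<forall>F'\<subseteq>unit_pair a \<union> unit_pair b. \<not> satisfiable F' \<longrightarrow>
      vars F' = vars (unit_pair a \<union> unit_pair b)"
    unfolding VMU_def by blast
  hence "vars (unit_pair a) = vars (unit_pair a \<union> unit_pair b)"
    using Un_upper1 unsatisfiable_unit_pair by metis
  thus False using assms by (auto simp: vars_unit_pair vars_Un)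
qed

theorem lemma4p3:
  assumes "infinite (UNIV :: 'v set)"
  shows "(VMU :: 'v cls set) \<subset> LEAN - {{}}"
proof -
  obtain a b :: 'v where ab: "a \<noteq> b"
    using ex_new_if_finite[OF assms, of "{undefined}"] by blast
  have "unit_pair a \<union> unit_pair b \<noteq> {}" by (simp add: unit_pair_def)
  hence "unit_pair a \<union> unit_pair b \<in> LEAN - {{}}" by (simp add: unit_pairs_LEAN)
  moreover have "unit_pair a \<union> unit_pair b \<notin> VMU" using ab by (rule unit_pairs_not_VMU)
  ultimately show ?thesis using VMU_subset_LEAN by blast
qed

end
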